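(* Let $n \ge 2$, $k \ge 1$ and $n_i, m_i \in \mathbb{Z}\setminus\{0\}$ for $1 \le i \le k$. If the group presented by $\mathcal{P}_n(n_1,\dots,n_k;m_1,\dots,m_k)$ is isomorphic to $Q_{4n}$, then the map $x \mapsto x$, $y \mapsto y$ induces a group isomorphism from the group presented by $\mathcal{P}_n(n_1,\dots,n_k;m_1,\dots,m_k)$ to $Q_{4n}$.
   Context: $Q_{4n} = \langle x, y \mid x^n y^{-2}, xyxy^{-1} \rangle$. With $n_{k+1} = 1 - \sum_{i=1}^k n_i$, $m_{k+1} = 1 - \sum_{i=1}^k m_i$, $\mathcal{P}_n(n_1,\dots,n_k;m_1,\dots,m_k) = \langle x, y \mid x^n y^{-2},\ x^{n_1} y x^{m_1} y^{-1} \cdots x^{n_{k+1}} y x^{m_{k+1}} y^{-1} \rangle$. *)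

theory Defs
  imports "HOL-Algebra.Group"
begin

text \<open>Words in a free group: letters (True, g) = g, (False, g) = g inverse.\<close>
type_synonym 'a fword = "(bool \<times> 'a) list"

definition inv_letter :: "bool \<times> 'a \<Rightarrow> bool \<times> 'a" where
  "inv_letter l = (\<not> fst l, snd l)"

inductive_set pres_rel :: "'a fword set \<Rightarrow> ('a fword \<times> 'a fword) set"
  for R :: "'a fword set" where
  prefl: "(w, w) \<in> pres_rel R"
| psym: "(u, v) \<in> pres_rel R \<Longrightarrow> (v, u) \<in> pres_rel R"
| ptrans: "(u, v) \<in> pres_rel R \<Longrightarrow> (v, w) \<in> pres_rel R \<Longrightarrow> (u, w) \<in> pres_rel R"
| pcancel: "(u @ [l, inv_letter l] @ v, u @ v) \<in> pres_rel R"
| prel: "r \<in> R \<Longrightarrow> (u @ r @ v, u @ v) \<in> pres_rel R"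

definition presented_group :: "'a fword set \<Rightarrow> 'a fword set monoid" where
  "presented_group R =
     \<lparr> carrier = UNIV // pres_rel R,
       monoid.mult = (\<lambda>A B. \<Union>a\<in>A. \<Union>b\<in>B. pres_rel R `` {a @ b}),
       one = pres_rel R `` {[]} \<rparr>"

definition gen_class :: "'a fword set \<Rightarrow> 'a \<Rightarrow> 'a fword set" where
  "gen_class R g = pres_rel R `` {[(True, g)]}"

definition wpow :: "'a \<Rightarrow> int \<Rightarrow> 'a fword" where
  "wpow g z = replicate (nat \<bar>z\<bar>) (0 \<le> z, g)"

datatype gen = X | Y

definition Q_rels :: "nat \<Rightarrow> gen fword set" where
  "Q_rels n = { wpow X (int n) @ wpow Y (-2),
                [(True, X), (True, Y), (True, X), (False, Y)] }"

definition Q_group :: "nat \<Rightarrow> gen fword set monoid" where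
  "Q_group n = presented_group (Q_rels n)"

definition P_rels :: "nat \<Rightarrow> int list \<Rightarrow> int list \<Rightarrow> gen fword set" where
  "P_rels n ns ms = { wpow X (int n) @ wpow Y (-2),
     concat (map (\<lambda>(a, b). wpow X a @ [(True, Y)] @ wpow X b @ [(False, Y)])
                 (zip (ns @ [1 - sum_list ns]) (ms @ [1 - sum_list ms]))) }"

definition P_group :: "nat \<Rightarrow> int list \<Rightarrow> int list \<Rightarrow> gen fword set monoid" where
  "P_group n ns ms = presented_group (P_rels n ns ms)"

end

theory Submission
  imports Defs
begin

text \<open>In \<open>Q\<^sub>4\<^sub>n\<close> conjugation by \<open>y\<close> inverts \<open>x\<close>, so each factor \<open>x^n\<^sub>i y x^m\<^sub>i y^-1\<close> of the
  second relator of \<open>\<P>\<^sub>n\<close> equals \<open>x^(n\<^sub>i - m\<^sub>i)\<close> and the whole relator equals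
  \<open>x^(\<Sigma>n\<^sub>i - \<Sigma>m\<^sub>i) = x^(1 - 1) = 1\<close>. Hence \<open>x \<mapsto> x, y \<mapsto> y\<close> induces a surjective
  homomorphism from the \<open>\<P>\<^sub>n\<close>-group onto \<open>Q\<^sub>4\<^sub>n\<close>. Since \<open>x^2n = 1\<close>, every element of
  \<open>Q\<^sub>4\<^sub>n\<close> is some \<open>x^a y^e\<close> with \<open>0 \<le> a < 2n\<close> and \<open>e \<in> {0, 1}\<close>, so \<open>Q\<^sub>4\<^sub>n\<close> is finite,
  and a surjective homomorphism onto a finite group isomorphic to its domain is bijective.\<close>

(* A constant rather than membership in pres_rel R, so that \<open>\<dots>\<close> in calculations
   refers to the right-hand word. *)
definition pres_eq :: "'a fword set \<Rightarrow> 'a fword \<Rightarrow> 'a fword \<Rightarrow> bool"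
    (\<open>_ \<turnstile> _ \<approx> _\<close> [51, 51, 51] 50) where
  "R \<turnstile> u \<approx> v \<longleftrightarrow> (u, v) \<in> pres_rel R"

abbreviation pos :: "'a \<Rightarrow> bool \<times> 'a" where "pos g \<equiv> (True, g)"
abbreviation neg :: "'a \<Rightarrow> bool \<times> 'a" where "neg g \<equiv> (False, g)"

lemma pres_eq_refl [simp]: "R \<turnstile> u \<approx> u"
  unfolding pres_eq_def by (rule pres_rel.prefl)

lemma pres_eq_sym: "R \<turnstile> u \<approx> v \<Longrightarrow> R \<turnstile> v \<approx> u"
  unfolding pres_eq_def by (rule pres_rel.psym)

lemma pres_eq_trans [trans]: "R \<turnstile> u \<approx> v \<Longrightarrow> R \<turnstile> v \<approx> w \<Longrightarrow> R \<turnstile> u \<approx> w"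
  unfolding pres_eq_def by (rule pres_rel.ptrans)

lemma pres_eq_cancel: "R \<turnstile> u @ [(b, g), (\<not> b, g)] @ v \<approx> u @ v"
  using pres_rel.pcancel[of u "(b, g)" v R] by (simp add: pres_eq_def inv_letter_def)

lemma pres_eq_relator: "r \<in> R \<Longrightarrow> R \<turnstile> u @ r @ v \<approx> u @ v"
  unfolding pres_eq_def by (rule pres_rel.prel)

lemma pres_rel_append_cong: "(u, v) \<in> pres_rel R \<Longrightarrow> (a @ u @ b, a @ v @ b) \<in> pres_rel R"
proof (induction rule: pres_rel.induct)
  case (pcancel u l v)
  show ?case using pres_rel.pcancel[of "a @ u" l "v @ b" R] by simp
next
  case (prel r u v)
  show ?case using pres_rel.prel[OF prel, of "a @ u" "v @ b"] by simp
qed (blast intro: pres_rel.intros)+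

lemma pres_eq_appendL: "R \<turnstile> u \<approx> v \<Longrightarrow> R \<turnstile> w @ u \<approx> w @ v"
  using pres_rel_append_cong[of u v R w "[]"] by (simp add: pres_eq_def)

lemma pres_eq_appendR: "R \<turnstile> u \<approx> v \<Longrightarrow> R \<turnstile> u @ w \<approx> v @ w"
  using pres_rel_append_cong[of u v R "[]" w] by (simp add: pres_eq_def)

lemma equiv_pres_rel: "equiv UNIV (pres_rel R)"
  by (rule equivI) (auto simp: refl_on_def sym_def trans_def intro: pres_rel.intros)

lemma wpow_0 [simp]: "wpow g 0 = []"
  by (simp add: wpow_def)

lemma wpow_succ_nonneg: "0 \<le> c \<Longrightarrow> wpow g (c + 1) = wpow g c @ [pos g]"
  by (simp add: wpow_def nat_add_distrib replicate_append_same)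

lemma wpow_pred_nonpos:
  assumes "c \<le> 0"
  shows "wpow g (c - 1) = wpow g c @ [neg g]"
proof -
  have "nat \<bar>c - 1\<bar> = Suc (nat \<bar>c\<bar>)" using assms by simp
  then show ?thesis
    using assms unfolding wpow_def by (cases "c = 0") (simp_all add: replicate_append_same)
qed

lemma wpow_append_pos: "R \<turnstile> wpow g c @ [pos g] \<approx> wpow g (c + 1)"
proof (cases "0 \<le> c")
  case False
  then have "wpow g c = wpow g (c + 1) @ [neg g]"
    using wpow_pred_nonpos[of "c + 1" g] by simp
  then show ?thesis using pres_eq_cancel[of R "wpow g (c + 1)" False g "[]"] by simp
qed (simp add: wpow_succ_nonneg)

lemma wpow_append_neg: "R \<turnstile> wpow g c @ [neg g] \<approx> wpow g (c - 1)"
proof (cases "c \<le> 0")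
  case False
  then have "wpow g c = wpow g (c - 1) @ [pos g]"
    using wpow_succ_nonneg[of "c - 1" g] by simp
  then show ?thesis using pres_eq_cancel[of R "wpow g (c - 1)" True g "[]"] by simp
qed (simp add: wpow_pred_nonpos)

lemma wpow_add: "R \<turnstile> wpow g a @ wpow g b \<approx> wpow g (a + b)"
proof (induction b rule: int_induct[where k = 0])
  case (step1 b)
  have "wpow g a @ wpow g (b + 1) = (wpow g a @ wpow g b) @ [pos g]"
    using step1 by (simp add: wpow_succ_nonneg)
  also have "R \<turnstile> \<dots> \<approx> wpow g (a + b) @ [pos g]" by (rule pres_eq_appendR[OF step1(2)])
  also have "R \<turnstile> \<dots> \<approx> wpow g (a + (b + 1))" unfolding add.assoc[symmetric] by (rule wpow_append_pos)
  finally show ?case .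
next
  case (step2 b)
  have "wpow g a @ wpow g (b - 1) = (wpow g a @ wpow g b) @ [neg g]"
    using step2 by (simp add: wpow_pred_nonpos)
  also have "R \<turnstile> \<dots> \<approx> wpow g (a + b) @ [neg g]" by (rule pres_eq_appendR[OF step2(2)])
  also have "R \<turnstile> \<dots> \<approx> wpow g (a + (b - 1))" unfolding add_diff_eq by (rule wpow_append_neg)
  finally show ?case .
qed simp

lemma wpow_mult_trivial:
  assumes "R \<turnstile> wpow g p \<approx> []"
  shows "R \<turnstile> wpow g (p * q) \<approx> []"
proof (induction q rule: int_induct[where k = 0])
  case (step1 q)
  have "R \<turnstile> wpow g (p * (q + 1)) \<approx> wpow g (p * q) @ wpow g p"
    using pres_eq_sym[OF wpow_add] by (simp add: distrib_left)
  also have "R \<turnstile> \<dots> \<approx> [] @ []"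
    using pres_eq_trans[OF pres_eq_appendR[OF step1(2)] pres_eq_appendL[OF assms]] by simp
  finally show ?case by simp
next
  case (step2 q)
  have "R \<turnstile> wpow g (p * (q - 1)) \<approx> wpow g (p * (q - 1)) @ wpow g p"
    using pres_eq_sym[OF pres_eq_appendL[OF assms]] by simp
  also have "R \<turnstile> \<dots> \<approx> wpow g (p * q)"
    using wpow_add[of R g "p * (q - 1)" p] by (simp add: algebra_simps)
  finally show ?case using step2(2) by (rule pres_eq_trans)
qed simp

lemma wpow_mod:
  assumes "R \<turnstile> wpow g p \<approx> []"
  shows "R \<turnstile> wpow g a \<approx> wpow g (a mod p)"
proof -
  have "R \<turnstile> wpow g a \<approx> wpow g (a mod p) @ wpow g (p * (a div p))"
    using pres_eq_sym[OF wpow_add[of R g "a mod p" "p * (a div p)"]] by simp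
  also have "R \<turnstile> \<dots> \<approx> wpow g (a mod p)"
    using pres_eq_appendL[OF wpow_mult_trivial[OF assms]] by simp
  finally show ?thesis .
qed

subsection \<open>Homomorphisms between presented groups\<close>

lemma pres_rel_subset_if_relators_trivial:
  assumes "\<And>r. r \<in> R \<Longrightarrow> S \<turnstile> r \<approx> []"
  shows "pres_rel R \<subseteq> pres_rel S"
proof (rule subrelI)
  fix u v assume "(u, v) \<in> pres_rel R"
  then show "(u, v) \<in> pres_rel S"
  proof (induction rule: pres_rel.induct)
    case (prel r u v)
    show ?case
      using pres_eq_appendR[OF pres_eq_appendL[OF assms[OF prel]], of u v]
      by (simp add: pres_eq_def)
  qed (blast intro: pres_rel.intros)+
qed

lemma carrier_presented_group_iff:
  "A \<in> carrier (presented_group R) \<longleftrightarrow> (\<exists>a. A = pres_rel R `` {a})"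
  by (auto simp: presented_group_def quotient_def)

lemma presented_group_mult_class:
  "pres_rel R `` {a} \<otimes>\<^bsub>presented_group R\<^esub> pres_rel R `` {b} = pres_rel R `` {a @ b}"
proof -
  have "congruent2 (pres_rel R) (pres_rel R) (\<lambda>a b. pres_rel R `` {a @ b})"
  proof (rule congruent2I')
    fix a a' b b' assume "(a, a') \<in> pres_rel R" "(b, b') \<in> pres_rel R"
    then have "R \<turnstile> a @ b \<approx> a' @ b'"
      unfolding pres_eq_def[symmetric] by (blast intro: pres_eq_trans pres_eq_appendL pres_eq_appendR)
    then show "pres_rel R `` {a @ b} = pres_rel R `` {a' @ b'}"
      by (simp add: pres_eq_def equiv_class_eq[OF equiv_pres_rel])
  qed
  then show ?thesis
    by (simp add: presented_group_def UN_equiv_class2[OF equiv_pres_rel equiv_pres_rel])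
qed

lemma Image_pres_rel_class:
  assumes "pres_rel R \<subseteq> pres_rel S"
  shows "pres_rel S `` (pres_rel R `` {w}) = pres_rel S `` {w}"
  using assms by (blast intro: pres_rel.ptrans pres_rel.prefl)

lemma presented_group_Image_hom:
  assumes "pres_rel R \<subseteq> pres_rel S"
  shows "Image (pres_rel S) \<in> hom (presented_group R) (presented_group S)"
proof (rule homI)
  fix A assume "A \<in> carrier (presented_group R)"
  then show "pres_rel S `` A \<in> carrier (presented_group S)"
    by (auto simp: carrier_presented_group_iff Image_pres_rel_class[OF assms])
next
  fix A B assume "A \<in> carrier (presented_group R)" "B \<in> carrier (presented_group R)"
  then obtain a b where "A = pres_rel R `` {a}" "B = pres_rel R `` {b}"
    by (auto simp: carrier_presented_group_iff)
  then show "pres_rel S `` (A \<otimes>\<^bsub>presented_group R\<^esub> B) =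
      pres_rel S `` A \<otimes>\<^bsub>presented_group S\<^esub> pres_rel S `` B"
    by (simp only: presented_group_mult_class Image_pres_rel_class[OF assms])
qed

lemma presented_group_Image_onto:
  assumes "pres_rel R \<subseteq> pres_rel S"
  shows "Image (pres_rel S) ` carrier (presented_group R) = carrier (presented_group S)"
proof
  show "Image (pres_rel S) ` carrier (presented_group R) \<subseteq> carrier (presented_group S)"
    using presented_group_Image_hom[OF assms] by (auto simp: hom_def)
  show "carrier (presented_group S) \<subseteq> Image (pres_rel S) ` carrier (presented_group R)"
  proof
    fix C assume "C \<in> carrier (presented_group S)"
    then obtain w where "C = pres_rel S `` {w}" by (auto simp: carrier_presented_group_iff)
    then have "C = pres_rel S `` (pres_rel R `` {w})" by (simp only: Image_pres_rel_class[OF assms])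
    moreover have "pres_rel R `` {w} \<in> carrier (presented_group R)"
      by (auto simp: carrier_presented_group_iff)
    ultimately show "C \<in> Image (pres_rel S) ` carrier (presented_group R)" by blast
  qed
qed

lemma surj_hom_iso_if_isomorphic_finite:
  assumes "h \<in> hom G H" "h ` carrier G = carrier H" "G \<cong> H" "finite (carrier H)"
  shows "h \<in> iso G H"
proof -
  have "finite (carrier G)" using assms(3,4) iso_finite by blast
  moreover have "card (h ` carrier G) = card (carrier G)" using assms(2,3) iso_same_card by metis
  ultimately have "inj_on h (carrier G)" by (rule eq_card_imp_inj_on)
  then show ?thesis using assms(1,2) by (simp add: iso_def bij_betw_def)
qed

subsection \<open>Computations in \<open>Q\<^sub>4\<^sub>n\<close>\<close>

lemma Q_relator_power: "Q_rels n \<turnstile> u @ wpow X (int n) @ [neg Y, neg Y] @ v \<approx> u @ v"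
  using pres_eq_relator[of "wpow X (int n) @ [neg Y, neg Y]" "Q_rels n" u v]
  by (simp add: Q_rels_def wpow_def numeral_2_eq_2)

lemma Q_relator_conj: "Q_rels n \<turnstile> u @ [pos X, pos Y, pos X, neg Y] @ v \<approx> u @ v"
  by (rule pres_eq_relator) (simp add: Q_rels_def)

lemma Q_x_pow_n_eq_y_sq: "Q_rels n \<turnstile> wpow X (int n) \<approx> [pos Y, pos Y]"
proof -
  have "Q_rels n \<turnstile> wpow X (int n) \<approx> wpow X (int n) @ [neg Y, pos Y]"
    using pres_eq_sym[OF pres_eq_cancel[of _ "wpow X (int n)" False Y "[]"]] by simp
  also have "Q_rels n \<turnstile> \<dots> \<approx> wpow X (int n) @ [neg Y, neg Y, pos Y, pos Y]"
    using pres_eq_sym[OF pres_eq_cancel[of _ "wpow X (int n) @ [neg Y]" False Y "[pos Y]"]] by simp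
  also have "Q_rels n \<turnstile> \<dots> \<approx> [pos Y, pos Y]"
    using Q_relator_power[of n "[]" "[pos Y, pos Y]"] by simp
  finally show ?thesis .
qed

lemma Q_yx_eq_xinv_y: "Q_rels n \<turnstile> [pos Y, pos X] \<approx> [neg X, pos Y]"
proof -
  have "Q_rels n \<turnstile> [pos Y, pos X] \<approx> [pos Y, pos X, neg Y, pos Y]"
    using pres_eq_sym[OF pres_eq_cancel[of _ "[pos Y, pos X]" False Y "[]"]] by simp
  also have "Q_rels n \<turnstile> \<dots> \<approx> [neg X, pos X, pos Y, pos X, neg Y, pos Y]"
    using pres_eq_sym[OF pres_eq_cancel[of _ "[]" False X "[pos Y, pos X, neg Y, pos Y]"]] by simp
  also have "Q_rels n \<turnstile> \<dots> \<approx> [neg X, pos Y]"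
    using Q_relator_conj[of n "[neg X]" "[pos Y]"] by simp
  finally show ?thesis .
qed

lemma Q_yxinv_eq_xy: "Q_rels n \<turnstile> [pos Y, neg X] \<approx> [pos X, pos Y]"
proof -
  have "Q_rels n \<turnstile> [pos Y, neg X] \<approx> [pos X] @ [neg X, pos Y] @ [neg X]"
    using pres_eq_sym[OF pres_eq_cancel[of _ "[]" True X "[pos Y, neg X]"]] by simp
  also have "Q_rels n \<turnstile> \<dots> \<approx> [pos X] @ [pos Y, pos X] @ [neg X]"
    by (intro pres_eq_appendL pres_eq_appendR pres_eq_sym[OF Q_yx_eq_xinv_y])
  also have "Q_rels n \<turnstile> \<dots> \<approx> [pos X, pos Y]"
    using pres_eq_cancel[of _ "[pos X, pos Y]" True X "[]"] by simp
  finally show ?thesis .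
qed

lemma Q_y_wpow_X_swap: "Q_rels n \<turnstile> [pos Y] @ wpow X m \<approx> wpow X (- m) @ [pos Y]"
proof (induction m rule: int_induct[where k = 0])
  case (step1 m)
  have "[pos Y] @ wpow X (m + 1) = ([pos Y] @ wpow X m) @ [pos X]"
    using step1 by (simp add: wpow_succ_nonneg)
  also have "Q_rels n \<turnstile> \<dots> \<approx> wpow X (- m) @ [pos Y, pos X]"
    using pres_eq_appendR[OF step1(2)] by simp
  also have "Q_rels n \<turnstile> \<dots> \<approx> (wpow X (- m) @ [neg X]) @ [pos Y]"
    using pres_eq_appendL[OF Q_yx_eq_xinv_y] by simp
  also have "Q_rels n \<turnstile> \<dots> \<approx> wpow X (- (m + 1)) @ [pos Y]"
    using pres_eq_appendR[OF wpow_append_neg] by simp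
  finally show ?case .
next
  case (step2 m)
  have "[pos Y] @ wpow X (m - 1) = ([pos Y] @ wpow X m) @ [neg X]"
    using step2 by (simp add: wpow_pred_nonpos)
  also have "Q_rels n \<turnstile> \<dots> \<approx> wpow X (- m) @ [pos Y, neg X]"
    using pres_eq_appendR[OF step2(2)] by simp
  also have "Q_rels n \<turnstile> \<dots> \<approx> (wpow X (- m) @ [pos X]) @ [pos Y]"
    using pres_eq_appendL[OF Q_yxinv_eq_xy] by simp
  also have "Q_rels n \<turnstile> \<dots> \<approx> wpow X (- (m - 1)) @ [pos Y]"
    using pres_eq_appendR[OF wpow_append_pos[of _ X "- m"]] by simp
  finally show ?case .
qed simp

lemma Q_conj_wpow_X: "Q_rels n \<turnstile> [pos Y] @ wpow X m @ [neg Y] \<approx> wpow X (- m)"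
proof -
  have "Q_rels n \<turnstile> ([pos Y] @ wpow X m) @ [neg Y] \<approx> wpow X (- m) @ [pos Y, neg Y] @ []"
    using pres_eq_appendR[OF Q_y_wpow_X_swap] by simp
  also have "Q_rels n \<turnstile> \<dots> \<approx> wpow X (- m)"
    using pres_eq_cancel[of _ "wpow X (- m)" True Y "[]"] by simp
  finally show ?thesis by simp
qed

lemma Q_long_relator_factor:
  "Q_rels n \<turnstile> wpow X a @ [pos Y] @ wpow X b @ [neg Y] \<approx> wpow X (a - b)"
proof -
  have "Q_rels n \<turnstile> wpow X a @ [pos Y] @ wpow X b @ [neg Y] \<approx> wpow X a @ wpow X (- b)"
    by (rule pres_eq_appendL[OF Q_conj_wpow_X])
  also have "Q_rels n \<turnstile> \<dots> \<approx> wpow X (a - b)"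
    using wpow_add[of _ X a "- b"] by simp
  finally show ?thesis .
qed

lemma Q_long_relator:
  "length as = length bs \<Longrightarrow>
   Q_rels n \<turnstile> concat (map (\<lambda>(a, b). wpow X a @ [pos Y] @ wpow X b @ [neg Y]) (zip as bs))
     \<approx> wpow X (sum_list as - sum_list bs)"
proof (induction as bs rule: list_induct2)
  case (Cons a as b bs)
  have "Q_rels n \<turnstile> concat (map (\<lambda>(a, b). wpow X a @ [pos Y] @ wpow X b @ [neg Y]) (zip (a # as) (b # bs)))
      \<approx> (wpow X a @ [pos Y] @ wpow X b @ [neg Y]) @ wpow X (sum_list as - sum_list bs)"
    using pres_eq_appendL[OF Cons.IH, of "wpow X a @ [pos Y] @ wpow X b @ [neg Y]"] by simp
  also have "Q_rels n \<turnstile> \<dots> \<approx> wpow X (a - b) @ wpow X (sum_list as - sum_list bs)"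
    by (rule pres_eq_appendR[OF Q_long_relator_factor])
  also have "Q_rels n \<turnstile> \<dots> \<approx> wpow X (sum_list (a # as) - sum_list (b # bs))"
    using wpow_add[of _ X "a - b" "sum_list as - sum_list bs"] by (simp add: algebra_simps)
  finally show ?case .
qed simp

lemma Q_yinv_eq_x_pow_neg_n_y: "Q_rels n \<turnstile> [neg Y] \<approx> wpow X (- int n) @ [pos Y]"
proof -
  have "Q_rels n \<turnstile> wpow X (- int n) @ [pos Y] \<approx> wpow X (- int n) @ [pos Y, pos Y] @ [neg Y]"
    using pres_eq_sym[OF pres_eq_cancel[of _ "wpow X (- int n) @ [pos Y]" True Y "[]"]] by simp
  also have "Q_rels n \<turnstile> \<dots> \<approx> wpow X (- int n) @ wpow X (int n) @ [neg Y]"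
    by (intro pres_eq_appendL pres_eq_appendR pres_eq_sym[OF Q_x_pow_n_eq_y_sq])
  also have "Q_rels n \<turnstile> \<dots> \<approx> [neg Y]"
    using pres_eq_appendR[OF wpow_add[of _ X "- int n" "int n"], where w = "[neg Y]"] by simp
  finally show ?thesis by (rule pres_eq_sym)
qed

lemma Q_wpow_X_order: "Q_rels n \<turnstile> wpow X (2 * int n) \<approx> []"
proof -
  have "Q_rels n \<turnstile> wpow X (- int n) \<approx> [pos Y] @ wpow X (int n) @ [neg Y]"
    by (rule pres_eq_sym[OF Q_conj_wpow_X])
  also have "Q_rels n \<turnstile> \<dots> \<approx> [pos Y] @ [pos Y, pos Y] @ [neg Y]"
    by (intro pres_eq_appendL pres_eq_appendR Q_x_pow_n_eq_y_sq)
  also have "Q_rels n \<turnstile> \<dots> \<approx> [pos Y, pos Y]"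
    using pres_eq_cancel[of _ "[pos Y, pos Y]" True Y "[]"] by simp
  also have "Q_rels n \<turnstile> \<dots> \<approx> wpow X (int n)"
    by (rule pres_eq_sym[OF Q_x_pow_n_eq_y_sq])
  finally have inv: "Q_rels n \<turnstile> wpow X (- int n) \<approx> wpow X (int n)" .
  have "Q_rels n \<turnstile> wpow X (2 * int n) \<approx> wpow X (int n) @ wpow X (int n)"
    using pres_eq_sym[OF wpow_add[of _ X "int n" "int n"]] by simp
  also have "Q_rels n \<turnstile> \<dots> \<approx> wpow X (- int n) @ wpow X (int n)"
    by (rule pres_eq_appendR[OF pres_eq_sym[OF inv]])
  also have "Q_rels n \<turnstile> \<dots> \<approx> []"
    using wpow_add[of _ X "- int n" "int n"] by simp
  finally show ?thesis .
qed

subsection \<open>Normal forms in \<open>Q\<^sub>4\<^sub>n\<close>\<close>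

definition Q_normal_word :: "int \<Rightarrow> bool \<Rightarrow> gen fword" where
  "Q_normal_word a e = wpow X a @ (if e then [pos Y] else [])"

lemma Q_normal_word_append_wpow_X:
  "Q_rels n \<turnstile> Q_normal_word a e @ wpow X m \<approx> Q_normal_word (if e then a - m else a + m) e"
proof (cases e)
  case True
  have "Q_rels n \<turnstile> wpow X a @ [pos Y] @ wpow X m \<approx> wpow X a @ wpow X (- m) @ [pos Y]"
    by (rule pres_eq_appendL[OF Q_y_wpow_X_swap])
  also have "Q_rels n \<turnstile> \<dots> \<approx> wpow X (a - m) @ [pos Y]"
    using pres_eq_appendR[OF wpow_add[of _ X a "- m"], where w = "[pos Y]"] by simp
  finally show ?thesis using True by (simp add: Q_normal_word_def)
qed (simp add: Q_normal_word_def wpow_add)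

lemma Q_normal_word_append_Y_letter:
  "\<exists>a' e'. Q_rels n \<turnstile> Q_normal_word a e @ [(s, Y)] \<approx> Q_normal_word a' e'"
proof (cases s)
  case True
  have "Q_rels n \<turnstile> wpow X a @ [pos Y, pos Y] \<approx> wpow X a @ wpow X (int n)"
    by (rule pres_eq_appendL[OF pres_eq_sym[OF Q_x_pow_n_eq_y_sq]])
  also have "Q_rels n \<turnstile> \<dots> \<approx> wpow X (a + int n)" by (rule wpow_add)
  finally have "Q_rels n \<turnstile> Q_normal_word a True @ [pos Y] \<approx> Q_normal_word (a + int n) False"
    by (simp add: Q_normal_word_def)
  moreover have "Q_normal_word a False @ [pos Y] = Q_normal_word a True"
    by (simp add: Q_normal_word_def)
  ultimately show ?thesis using True by (cases e) (auto intro: pres_eq_refl)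
next
  case False
  have "Q_rels n \<turnstile> wpow X a @ [neg Y] \<approx> wpow X a @ wpow X (- int n) @ [pos Y]"
    by (rule pres_eq_appendL[OF Q_yinv_eq_x_pow_neg_n_y])
  also have "Q_rels n \<turnstile> \<dots> \<approx> wpow X (a - int n) @ [pos Y]"
    using pres_eq_appendR[OF wpow_add[of _ X a "- int n"], where w = "[pos Y]"] by simp
  finally have "Q_rels n \<turnstile> Q_normal_word a False @ [neg Y] \<approx> Q_normal_word (a - int n) True"
    by (simp add: Q_normal_word_def)
  moreover have "Q_rels n \<turnstile> Q_normal_word a True @ [neg Y] \<approx> Q_normal_word a False"
    using pres_eq_cancel[of _ "wpow X a" True Y "[]"] by (simp add: Q_normal_word_def)
  ultimately show ?thesis using False by (cases e) auto
qed

lemma Q_normal_form: "\<exists>a e. Q_rels n \<turnstile> w \<approx> Q_normal_word a e"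
proof (induction w rule: rev_induct)
  case Nil
  have "Q_rels n \<turnstile> [] \<approx> Q_normal_word 0 False" by (simp add: Q_normal_word_def)
  then show ?case by blast
next
  case (snoc l w)
  then obtain a e where "Q_rels n \<turnstile> w @ [l] \<approx> Q_normal_word a e @ [l]"
    using pres_eq_appendR by blast
  moreover obtain s g where l: "l = (s, g)" by fastforce
  moreover have "\<exists>a' e'. Q_rels n \<turnstile> Q_normal_word a e @ [(s, g)] \<approx> Q_normal_word a' e'"
  proof (cases g)
    case X
    then have "[(s, g)] = wpow X (if s then 1 else - 1)" by (simp add: wpow_def)
    then show ?thesis using Q_normal_word_append_wpow_X by metis
  qed (use Q_normal_word_append_Y_letter in blast)
  ultimately show ?case by (blast intro: pres_eq_trans)
qed

lemma finite_Q_group: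
  assumes "n \<ge> 1"
  shows "finite (carrier (Q_group n))"
proof -
  have "carrier (Q_group n) \<subseteq>
      (\<lambda>(a, e). pres_rel (Q_rels n) `` {Q_normal_word a e}) ` ({0..<2 * int n} \<times> UNIV)"
  proof
    fix C assume "C \<in> carrier (Q_group n)"
    then obtain w where C: "C = pres_rel (Q_rels n) `` {w}"
      by (auto simp: Q_group_def carrier_presented_group_iff)
    obtain a e where "Q_rels n \<turnstile> w \<approx> Q_normal_word a e"
      using Q_normal_form by blast
    also have "Q_rels n \<turnstile> Q_normal_word a e \<approx> Q_normal_word (a mod (2 * int n)) e"
      unfolding Q_normal_word_def by (rule pres_eq_appendR[OF wpow_mod[OF Q_wpow_X_order]])
    finally have "C = pres_rel (Q_rels n) `` {Q_normal_word (a mod (2 * int n)) e}"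
      unfolding C pres_eq_def by (simp add: equiv_class_eq[OF equiv_pres_rel])
    moreover have "a mod (2 * int n) \<in> {0..<2 * int n}" using assms by simp
    ultimately show "C \<in> (\<lambda>(a, e). pres_rel (Q_rels n) `` {Q_normal_word a e}) ` ({0..<2 * int n} \<times> UNIV)"
      by force
  qed
  then show ?thesis by (rule finite_subset) simp
qed

lemma pres_rel_P_subset_Q:
  assumes "length ns = length ms"
  shows "pres_rel (P_rels n ns ms) \<subseteq> pres_rel (Q_rels n)"
proof (rule pres_rel_subset_if_relators_trivial)
  fix r assume "r \<in> P_rels n ns ms"
  then consider "r \<in> Q_rels n"
    | "r = concat (map (\<lambda>(a, b). wpow X a @ [pos Y] @ wpow X b @ [neg Y])
                 (zip (ns @ [1 - sum_list ns]) (ms @ [1 - sum_list ms])))"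
    by (auto simp: P_rels_def Q_rels_def)
  then show "Q_rels n \<turnstile> r \<approx> []"
  proof cases
    case 1
    then show ?thesis using pres_eq_relator[of r _ "[]" "[]"] by simp
  next
    case 2
    then show ?thesis using Q_long_relator[of "ns @ [1 - sum_list ns]" "ms @ [1 - sum_list ms]" n] assms
      by simp
  qed
qed

theorem corollary3p8:
  fixes n k :: nat and ns ms :: "int list"
  assumes "n \<ge> 2" and "k \<ge> 1"
    and "length ns = k" and "length ms = k"
    and "\<forall>i\<in>set ns. i \<noteq> 0" and "\<forall>i\<in>set ms. i \<noteq> 0"
    and "P_group n ns ms \<cong> Q_group n"
  shows "\<exists>h \<in> iso (P_group n ns ms) (Q_group n).
           h (gen_class (P_rels n ns ms) X) = gen_class (Q_rels n) X \<and>
           h (gen_class (P_rels n ns ms) Y) = gen_class (Q_rels n) Y"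
proof -
  have sub: "pres_rel (P_rels n ns ms) \<subseteq> pres_rel (Q_rels n)"
    using assms(3,4) by (simp add: pres_rel_P_subset_Q)
  let ?h = "Image (pres_rel (Q_rels n))"
  have "?h \<in> iso (P_group n ns ms) (Q_group n)"
    using surj_hom_iso_if_isomorphic_finite[OF presented_group_Image_hom[OF sub]
        presented_group_Image_onto[OF sub]] assms(1,7) finite_Q_group
    by (simp add: P_group_def Q_group_def)
  moreover have "?h (gen_class (P_rels n ns ms) g) = gen_class (Q_rels n) g" for g
    unfolding gen_class_def by (rule Image_pres_rel_class[OF sub])
  ultimately show ?thesis by blast
qed

end
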